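(* Let $k$ be a field and consider the graded algebras (with $\deg x=\deg y=1$) $A(p)=k\langle x,y\rangle/(xy^2-p^2y^2x,\ x^3y+px^2yx+p^2xyx^2+p^3yx^3)$ ($0\ne p\in k$); $B(p)=k\langle x,y\rangle/(xy^2+ip^2y^2x,\ x^3y+px^2yx+p^2xyx^2+p^3yx^3)$ ($0\ne p\in k$, $i\in k$, $i^2=-1$); $C(p)=k\langle x,y\rangle/(xy^2+pyxy+p^2y^2x,\ x^3y+jp^3yx^3)$ ($0\ne p\in k$, $j\in k$, $j^2-j+1=0$); $D(v,p)=k\langle x,y\rangle/(xy^2+vyxy+p^2y^2x,\ x^3y+(v+p)x^2yx+(p^2+pv)xyx^2+p^3yx^3)$ ($v,p\in k$, $p\ne0$). Two algebras from this list are isomorphic (as graded algebras) if and only if their defining relations (the displayed degree-3 relation and degree-4 relation, as elements of $k\langle x,y\rangle$) are the same. *)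

theory Defs
  imports Main
begin

text \<open>Words over the alphabet {x,y}: x is encoded as False, y as True.
  A noncommutative polynomial is a function from words to coefficients;
  the free algebra consists of those with finite support.\<close>

type_synonym 'k ncpoly = "bool list \<Rightarrow> 'k"

abbreviation (input) X :: bool where "X \<equiv> False"
abbreviation (input) Y :: bool where "Y \<equiv> True"

definition ncpolys :: "'k::field ncpoly set" where
  "ncpolys = {f. finite {w. f w \<noteq> 0}}"

definition nc_zero :: "'k::field ncpoly" where
  "nc_zero = (\<lambda>w. 0)"

definition nc_one :: "'k::field ncpoly" where
  "nc_one = (\<lambda>w. if w = [] then 1 else 0)"

definition nc_add :: "'k::field ncpoly \<Rightarrow> 'k ncpoly \<Rightarrow> 'k ncpoly" where
  "nc_add f g = (\<lambda>w. f w + g w)"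

definition nc_smult :: "'k::field \<Rightarrow> 'k ncpoly \<Rightarrow> 'k ncpoly" where
  "nc_smult c f = (\<lambda>w. c * f w)"

definition nc_mult :: "'k::field ncpoly \<Rightarrow> 'k ncpoly \<Rightarrow> 'k ncpoly" where
  "nc_mult f g = (\<lambda>w. \<Sum>i\<le>length w. f (take i w) * g (drop i w))"

definition nc_terms :: "('k::field \<times> bool list) list \<Rightarrow> 'k ncpoly" where
  "nc_terms ts = (\<lambda>u. sum_list (map (\<lambda>(c, w). if w = u then c else 0) ts))"

definition nc_homogeneous :: "nat \<Rightarrow> 'k::field ncpoly \<Rightarrow> bool" where
  "nc_homogeneous n f \<longleftrightarrow> f \<in> ncpolys \<and> (\<forall>w. f w \<noteq> 0 \<longrightarrow> length w = n)"

definition nc_is_ideal :: "'k::field ncpoly set \<Rightarrow> bool" where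
  "nc_is_ideal I \<longleftrightarrow> I \<subseteq> ncpolys \<and> nc_zero \<in> I \<and>
     (\<forall>f\<in>I. \<forall>g\<in>I. nc_add f g \<in> I) \<and>
     (\<forall>f\<in>I. \<forall>g\<in>ncpolys. nc_mult g f \<in> I \<and> nc_mult f g \<in> I)"

definition nc_ideal_gen :: "'k::field ncpoly set \<Rightarrow> 'k ncpoly set" where
  "nc_ideal_gen S = \<Inter>{I. nc_is_ideal I \<and> S \<subseteq> I}"

definition nc_coset :: "'k::field ncpoly set \<Rightarrow> 'k ncpoly \<Rightarrow> 'k ncpoly set" where
  "nc_coset I f = {g \<in> ncpolys. nc_add g (nc_smult (-1) f) \<in> I}"

definition nc_quot :: "'k::field ncpoly set \<Rightarrow> 'k ncpoly set set" where
  "nc_quot I = nc_coset I ` ncpolys"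

definition nc_quot_deg :: "'k::field ncpoly set \<Rightarrow> nat \<Rightarrow> 'k ncpoly set set" where
  "nc_quot_deg I n = nc_coset I ` {f. nc_homogeneous n f}"

definition graded_alg_iso ::
  "'k::field ncpoly set \<Rightarrow> 'k ncpoly set \<Rightarrow> ('k ncpoly set \<Rightarrow> 'k ncpoly set) \<Rightarrow> bool" where
  "graded_alg_iso I J phi \<longleftrightarrow>
     bij_betw phi (nc_quot I) (nc_quot J) \<and>
     phi (nc_coset I nc_one) = nc_coset J nc_one \<and>
     (\<forall>f\<in>ncpolys. \<forall>g\<in>ncpolys. \<forall>f'\<in>ncpolys. \<forall>g'\<in>ncpolys.
        phi (nc_coset I f) = nc_coset J f' \<and> phi (nc_coset I g) = nc_coset J g' \<longrightarrow>
          phi (nc_coset I (nc_add f g)) = nc_coset J (nc_add f' g') \<and>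
          phi (nc_coset I (nc_mult f g)) = nc_coset J (nc_mult f' g')) \<and>
     (\<forall>c. \<forall>f\<in>ncpolys. \<forall>f'\<in>ncpolys.
        phi (nc_coset I f) = nc_coset J f' \<longrightarrow>
          phi (nc_coset I (nc_smult c f)) = nc_coset J (nc_smult c f')) \<and>
     (\<forall>n. phi ` nc_quot_deg I n = nc_quot_deg J n)"

definition graded_alg_isomorphic :: "'k::field ncpoly set \<Rightarrow> 'k ncpoly set \<Rightarrow> bool" where
  "graded_alg_isomorphic I J \<longleftrightarrow> (\<exists>phi. graded_alg_iso I J phi)"

definition relsA :: "'k::field \<Rightarrow> 'k ncpoly \<times> 'k ncpoly" where
  "relsA p = (nc_terms [(1, [X,Y,Y]), (- (p^2), [Y,Y,X])],
              nc_terms [(1, [X,X,X,Y]), (p, [X,X,Y,X]), (p^2, [X,Y,X,X]), (p^3, [Y,X,X,X])])"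

definition relsB :: "'k::field \<Rightarrow> 'k \<Rightarrow> 'k ncpoly \<times> 'k ncpoly" where
  "relsB i p = (nc_terms [(1, [X,Y,Y]), (i * p^2, [Y,Y,X])],
              nc_terms [(1, [X,X,X,Y]), (p, [X,X,Y,X]), (p^2, [X,Y,X,X]), (p^3, [Y,X,X,X])])"

definition relsC :: "'k::field \<Rightarrow> 'k \<Rightarrow> 'k ncpoly \<times> 'k ncpoly" where
  "relsC j p = (nc_terms [(1, [X,Y,Y]), (p, [Y,X,Y]), (p^2, [Y,Y,X])],
              nc_terms [(1, [X,X,X,Y]), (j * p^3, [Y,X,X,X])])"

definition relsD :: "'k::field \<Rightarrow> 'k \<Rightarrow> 'k ncpoly \<times> 'k ncpoly" where
  "relsD v p = (nc_terms [(1, [X,Y,Y]), (v, [Y,X,Y]), (p^2, [Y,Y,X])],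
              nc_terms [(1, [X,X,X,Y]), (v + p, [X,X,Y,X]), (p^2 + p * v, [X,Y,X,X]),
                        (p^3, [Y,X,X,X])])"

definition listed_rels :: "('k::field ncpoly \<times> 'k ncpoly) set" where
  "listed_rels =
     {relsA p | p. p \<noteq> 0} \<union>
     {relsB i p | i p. p \<noteq> 0 \<and> i^2 = -1} \<union>
     {relsC j p | j p. p \<noteq> 0 \<and> j^2 - j + 1 = 0} \<union>
     {relsD v p | v p. p \<noteq> 0}"

definition rel_ideal :: "'k::field ncpoly \<times> 'k ncpoly \<Rightarrow> 'k ncpoly set" where
  "rel_ideal r = nc_ideal_gen {fst r, snd r}"

end

theory Submission
  imports Defs
begin

text \<open>All listed relation pairs have the shape
  xy^2 + v yxy + w y^2x  and  x^3y + s1 x^2yx + s2 xyx^2 + s3 yx^3.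
  A graded isomorphism sends x and y to linear forms x' = a x + b y and y' = c x + d y, which are
  linearly independent because relation ideals contain no linear forms, and it maps both relations,
  evaluated at x' and y', into the target ideal. In degree 3 that ideal is spanned by the cubic
  relation, and in degree 4 by the quartic relation and the cubic one multiplied by a letter on
  either side. The coefficients of xxx and yxx in the image of the cubic relation force c = 0; the
  words with two y's then give v = v' and w = w', and the words with a single y in the image of the
  quartic relation give s1 = s1', s2 = s2' and s3 = s3'.\<close>

lemma ncpolys_zero: "nc_zero \<in> ncpolys"
  by (simp add: ncpolys_def nc_zero_def)

lemma ncpolys_add:
  assumes "f \<in> ncpolys" and "g \<in> ncpolys"
  shows "nc_add f g \<in> ncpolys"
proof -
  have "{w. nc_add f g w \<noteq> 0} \<subseteq> {w. f w \<noteq> 0} \<union> {w. g w \<noteq> 0}"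
    by (auto simp: nc_add_def)
  with assms show ?thesis
    by (simp add: ncpolys_def finite_subset)
qed

lemma ncpolys_smult:
  assumes "f \<in> ncpolys"
  shows "nc_smult c f \<in> ncpolys"
proof -
  have "{w. nc_smult c f w \<noteq> 0} \<subseteq> {w. f w \<noteq> 0}"
    by (auto simp: nc_smult_def)
  with assms show ?thesis
    by (simp add: ncpolys_def finite_subset)
qed

lemma nc_mult_nonzeroE:
  assumes "nc_mult f g w \<noteq> 0"
  obtains i where "f (take i w) \<noteq> 0" and "g (drop i w) \<noteq> 0"
  using assms unfolding nc_mult_def by (metis (mono_tags, lifting) mult_eq_0_iff sum.neutral)

lemma ncpolys_mult:
  assumes "f \<in> ncpolys" and "g \<in> ncpolys"
  shows "nc_mult f g \<in> ncpolys"
proof -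
  let ?F = "{w. f w \<noteq> 0}" and ?G = "{w. g w \<noteq> 0}"
  have "{w. nc_mult f g w \<noteq> 0} \<subseteq> (\<lambda>(u, v). u @ v) ` (?F \<times> ?G)"
  proof
    fix w assume "w \<in> {w. nc_mult f g w \<noteq> 0}"
    then obtain i where "f (take i w) \<noteq> 0" "g (drop i w) \<noteq> 0"
      by (auto elim: nc_mult_nonzeroE)
    then show "w \<in> (\<lambda>(u, v). u @ v) ` (?F \<times> ?G)"
      by (intro image_eqI[of _ _ "(take i w, drop i w)"]) auto
  qed
  moreover have "finite ((\<lambda>(u, v). u @ v) ` (?F \<times> ?G))"
    using assms by (simp add: ncpolys_def)
  ultimately show ?thesis
    by (simp add: ncpolys_def finite_subset)
qed

lemma nc_homogeneous_add:
  "nc_homogeneous n f \<Longrightarrow> nc_homogeneous n g \<Longrightarrow> nc_homogeneous n (nc_add f g)"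
  unfolding nc_homogeneous_def by (simp add: ncpolys_add) (metis add_0 nc_add_def)

lemma nc_homogeneous_smult: "nc_homogeneous n f \<Longrightarrow> nc_homogeneous n (nc_smult c f)"
  using ncpolys_smult[of f c] unfolding nc_homogeneous_def nc_smult_def by auto

lemma nc_homogeneous_mult:
  assumes "nc_homogeneous m f" and "nc_homogeneous n g"
  shows "nc_homogeneous (m + n) (nc_mult f g)"
  unfolding nc_homogeneous_def
proof (intro conjI allI impI)
  show "nc_mult f g \<in> ncpolys"
    using assms by (simp add: nc_homogeneous_def ncpolys_mult)
  fix w assume "nc_mult f g w \<noteq> 0"
  then obtain i where "f (take i w) \<noteq> 0" "g (drop i w) \<noteq> 0" by (rule nc_mult_nonzeroE)
  then have "length (take i w) = m" "length (drop i w) = n"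
    using assms by (auto simp: nc_homogeneous_def)
  then show "length w = m + n" by (metis length_append append_take_drop_id)
qed

lemma nc_mult_Nil [simp]: "nc_mult f g [] = f [] * g []"
  by (simp add: nc_mult_def)

lemma nc_mult_Cons: "nc_mult f g (c # w) = f [] * g (c # w) + nc_mult (\<lambda>u. f (c # u)) g w"
  unfolding nc_mult_def by (simp add: sum.atMost_Suc_shift del: sum.atMost_Suc)

lemma nc_mult_snoc: "nc_mult f g (w @ [c]) = nc_mult f (\<lambda>u. g (u @ [c])) w + f (w @ [c]) * g []"
proof -
  have "nc_mult f g (w @ [c]) =
      (\<Sum>i\<le>length w. f (take i (w @ [c])) * g (drop i (w @ [c]))) + f (w @ [c]) * g []"
    unfolding nc_mult_def by simp
  also have "(\<Sum>i\<le>length w. f (take i (w @ [c])) * g (drop i (w @ [c]))) =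
      (\<Sum>i\<le>length w. f (take i w) * g (drop i w @ [c]))"
    by (rule sum.cong) auto
  finally show ?thesis unfolding nc_mult_def by simp
qed

lemma nc_mult_eq_0_if_short_left:
  "(\<And>u. length u \<le> length w \<Longrightarrow> f u = 0) \<Longrightarrow> nc_mult f g w = 0"
  unfolding nc_mult_def by (intro sum.neutral) auto

lemma nc_mult_eq_0_if_short_right:
  "(\<And>u. length u \<le> length w \<Longrightarrow> g u = 0) \<Longrightarrow> nc_mult f g w = 0"
  unfolding nc_mult_def by (intro sum.neutral) auto

lemma nc_mult_add_left: "nc_mult (nc_add f g) h = nc_add (nc_mult f h) (nc_mult g h)"
  unfolding nc_mult_def nc_add_def by (rule ext) (simp add: sum.distrib ring_distribs)

lemma nc_mult_add_right: "nc_mult f (nc_add g h) = nc_add (nc_mult f g) (nc_mult f h)"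
  unfolding nc_mult_def nc_add_def by (rule ext) (simp add: sum.distrib ring_distribs)

lemma nc_mult_smult_left: "nc_mult (nc_smult c f) g = nc_smult c (nc_mult f g)"
  unfolding nc_mult_def nc_smult_def by (rule ext) (simp add: sum_distrib_left ac_simps)

lemma nc_mult_smult_right: "nc_mult f (nc_smult c g) = nc_smult c (nc_mult f g)"
  unfolding nc_mult_def nc_smult_def by (rule ext) (simp add: sum_distrib_left ac_simps)

definition nc_monom :: "bool list \<Rightarrow> 'k::field ncpoly" where
  "nc_monom v = (\<lambda>u. if u = v then 1 else 0)"

lemma nc_homogeneous_monom: "nc_homogeneous (length v) (nc_monom v)"
proof -
  have "{w. nc_monom v w \<noteq> (0::'k::field)} \<subseteq> {v}" by (auto simp: nc_monom_def)
  then show ?thesis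
    by (auto simp: nc_homogeneous_def ncpolys_def nc_monom_def finite_subset)
qed

lemma ncpolys_monom: "nc_monom v \<in> ncpolys"
  using nc_homogeneous_monom nc_homogeneous_def by blast

lemma nc_homogeneous_letter: "nc_homogeneous 1 (nc_monom [c])"
  using nc_homogeneous_monom[of "[c]"] by simp

lemma nc_monom_letter_apply: "nc_monom [c] [d] = (if d = c then 1 else 0)"
  by (auto simp: nc_monom_def)

lemma nc_mult_monom_left:
  "nc_mult (nc_monom a) g w = (if take (length a) w = a then g (drop (length a) w) else 0)"
proof (induction a arbitrary: w)
  case Nil
  show ?case
    by (cases w) (simp_all add: nc_mult_Cons nc_monom_def nc_mult_eq_0_if_short_left)
next
  case (Cons c a)
  show ?case
  proof (cases w)
    case (Cons d u)
    have "nc_mult (nc_monom (c # a)) g w = nc_mult (\<lambda>v. nc_monom (c # a) (d # v)) g u"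
      by (simp add: Cons nc_mult_Cons nc_monom_def)
    also have "(\<lambda>v. nc_monom (c # a) (d # v)) = (if d = c then nc_monom a else (\<lambda>v. 0))"
      by (auto simp: nc_monom_def)
    finally show ?thesis
      using Cons.IH by (auto simp: Cons nc_mult_eq_0_if_short_left)
  qed (simp add: nc_monom_def)
qed

lemma nc_mult_monom_Nil_left: "nc_mult (nc_monom []) g = g"
  by (rule ext) (simp add: nc_mult_monom_left)

lemma nc_one_eq_monom_Nil: "nc_one = nc_monom []"
  by (simp add: nc_one_def nc_monom_def)

lemma ncpolys_one: "nc_one \<in> ncpolys"
  unfolding nc_one_eq_monom_Nil by (rule ncpolys_monom)

lemma nc_mult_monom: "nc_mult (nc_monom a) (nc_monom b) = nc_monom (a @ b)"
  unfolding fun_eq_iff nc_mult_monom_left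
  by (auto simp: nc_monom_def append_eq_conv_conj) (metis append_take_drop_id)

lemma nc_mult_homogeneous1_Cons:
  assumes "nc_homogeneous 1 f"
  shows "nc_mult f g (c # w) = f [c] * g w"
proof -
  have tail: "(\<lambda>v. f (c # v)) = nc_smult (f [c]) (nc_monom [])"
    using assms by (auto simp: fun_eq_iff nc_smult_def nc_monom_def nc_homogeneous_def)
  have "f [] = 0"
    using assms by (auto simp: nc_homogeneous_def)
  then have "nc_mult f g (c # w) = nc_mult (nc_smult (f [c]) (nc_monom [])) g w"
    unfolding nc_mult_Cons tail by simp
  also have "\<dots> = f [c] * g w"
    by (simp only: nc_mult_smult_left nc_mult_monom_Nil_left) (simp add: nc_smult_def)
  finally show ?thesis .
qed

definition nc_sub :: "'k::field ncpoly \<Rightarrow> 'k ncpoly \<Rightarrow> 'k ncpoly" where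
  "nc_sub f g = nc_add f (nc_smult (-1) g)"

lemma nc_sub_zero [simp]: "nc_sub f nc_zero = f"
  by (simp add: nc_sub_def nc_add_def nc_smult_def nc_zero_def)

lemma nc_ideal_zero: "nc_is_ideal I \<Longrightarrow> nc_zero \<in> I"
  unfolding nc_is_ideal_def by blast

lemma nc_ideal_add: "nc_is_ideal I \<Longrightarrow> f \<in> I \<Longrightarrow> g \<in> I \<Longrightarrow> nc_add f g \<in> I"
  unfolding nc_is_ideal_def by blast

lemma nc_ideal_mult_left: "nc_is_ideal I \<Longrightarrow> f \<in> I \<Longrightarrow> g \<in> ncpolys \<Longrightarrow> nc_mult g f \<in> I"
  unfolding nc_is_ideal_def by blast

lemma nc_ideal_mult_right: "nc_is_ideal I \<Longrightarrow> f \<in> I \<Longrightarrow> g \<in> ncpolys \<Longrightarrow> nc_mult f g \<in> I"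
  unfolding nc_is_ideal_def by blast

lemma nc_ideal_smult:
  assumes "nc_is_ideal I" and "f \<in> I"
  shows "nc_smult c f \<in> I"
proof -
  have "nc_mult (nc_smult c (nc_monom [])) f \<in> I"
    using assms by (intro nc_ideal_mult_left ncpolys_smult ncpolys_monom)
  then show ?thesis
    by (simp only: nc_mult_smult_left nc_mult_monom_Nil_left)
qed

lemma nc_ideal_ncpolys: "nc_is_ideal ncpolys"
  unfolding nc_is_ideal_def using ncpolys_zero ncpolys_add ncpolys_mult by blast

lemma nc_ideal_gen_is_ideal:
  assumes "S \<subseteq> ncpolys"
  shows "nc_is_ideal (nc_ideal_gen S)"
proof -
  let ?F = "{I. nc_is_ideal I \<and> S \<subseteq> I}"
  have "ncpolys \<in> ?F"
    using nc_ideal_ncpolys assms by simp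
  then have "\<Inter>?F \<subseteq> ncpolys"
    by blast
  moreover have "nc_zero \<in> \<Inter>?F"
    using nc_ideal_zero by blast
  moreover have "\<forall>f\<in>\<Inter>?F. \<forall>g\<in>\<Inter>?F. nc_add f g \<in> \<Inter>?F"
    using nc_ideal_add by blast
  moreover have "\<forall>f\<in>\<Inter>?F. \<forall>g\<in>ncpolys. nc_mult g f \<in> \<Inter>?F \<and> nc_mult f g \<in> \<Inter>?F"
    using nc_ideal_mult_left nc_ideal_mult_right by blast
  ultimately show ?thesis
    unfolding nc_ideal_gen_def nc_is_ideal_def by blast
qed

lemma nc_ideal_gen_generators: "S \<subseteq> nc_ideal_gen S"
  unfolding nc_ideal_gen_def by blast

lemma nc_ideal_gen_least: "nc_is_ideal I \<Longrightarrow> S \<subseteq> I \<Longrightarrow> nc_ideal_gen S \<subseteq> I"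
  unfolding nc_ideal_gen_def by blast

lemma nc_coset_eq_iff:
  assumes I: "nc_is_ideal I" and "f \<in> ncpolys" and "g \<in> ncpolys"
  shows "nc_coset I f = nc_coset I g \<longleftrightarrow> nc_sub f g \<in> I"
proof
  assume "nc_coset I f = nc_coset I g"
  moreover have "f \<in> nc_coset I f"
    using assms nc_ideal_zero[OF I]
    by (simp add: nc_coset_def nc_add_def nc_smult_def nc_zero_def [symmetric])
  ultimately show "nc_sub f g \<in> I"
    by (simp add: nc_coset_def nc_sub_def)
next
  assume fg: "nc_sub f g \<in> I"
  have "nc_sub h g \<in> I \<longleftrightarrow> nc_sub h f \<in> I" for h
  proof
    have "nc_sub h g = nc_add (nc_sub h f) (nc_sub f g)"
      by (simp add: fun_eq_iff nc_sub_def nc_add_def nc_smult_def)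
    then show "nc_sub h f \<in> I \<Longrightarrow> nc_sub h g \<in> I"
      using fg nc_ideal_add[OF I] by simp
    have "nc_sub h f = nc_add (nc_sub h g) (nc_smult (-1) (nc_sub f g))"
      by (simp add: fun_eq_iff nc_sub_def nc_add_def nc_smult_def)
    then show "nc_sub h g \<in> I \<Longrightarrow> nc_sub h f \<in> I"
      using fg nc_ideal_add[OF I] nc_ideal_smult[OF I] by simp
  qed
  then show "nc_coset I f = nc_coset I g"
    by (auto simp: nc_coset_def nc_sub_def)
qed

lemma nc_coset_eq_zero_iff:
  "nc_is_ideal I \<Longrightarrow> f \<in> ncpolys \<Longrightarrow> nc_coset I f = nc_coset I nc_zero \<longleftrightarrow> f \<in> I"
  using nc_coset_eq_iff ncpolys_zero by fastforce

lemma graded_alg_iso_id: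
  assumes I: "nc_is_ideal I"
  shows "graded_alg_iso I I id"
  unfolding graded_alg_iso_def
proof (intro conjI ballI allI impI)
  fix f g f' g'
  assume polys: "f \<in> ncpolys" "g \<in> ncpolys" "f' \<in> ncpolys" "g' \<in> ncpolys"
    and "id (nc_coset I f) = nc_coset I f' \<and> id (nc_coset I g) = nc_coset I g'"
  then have diffs: "nc_sub f f' \<in> I" "nc_sub g g' \<in> I"
    using nc_coset_eq_iff[OF I] by auto
  have "nc_sub (nc_add f g) (nc_add f' g') = nc_add (nc_sub f f') (nc_sub g g')"
    by (simp add: fun_eq_iff nc_sub_def nc_add_def nc_smult_def)
  then have "nc_sub (nc_add f g) (nc_add f' g') \<in> I"
    using diffs nc_ideal_add[OF I] by simp
  then show "id (nc_coset I (nc_add f g)) = nc_coset I (nc_add f' g')"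
    using nc_coset_eq_iff[OF I ncpolys_add ncpolys_add] polys by simp
  have "nc_sub (nc_mult f g) (nc_mult f' g') =
      nc_add (nc_mult (nc_sub f f') g) (nc_mult f' (nc_sub g g'))"
    unfolding nc_sub_def nc_mult_add_left nc_mult_add_right nc_mult_smult_left nc_mult_smult_right
    by (simp add: fun_eq_iff nc_add_def nc_smult_def)
  then have "nc_sub (nc_mult f g) (nc_mult f' g') \<in> I"
    using diffs polys
    by (simp add: nc_ideal_add[OF I] nc_ideal_mult_left[OF I] nc_ideal_mult_right[OF I])
  then show "id (nc_coset I (nc_mult f g)) = nc_coset I (nc_mult f' g')"
    using nc_coset_eq_iff[OF I ncpolys_mult ncpolys_mult] polys by simp
next
  fix c f f'
  assume polys: "f \<in> ncpolys" "f' \<in> ncpolys" and "id (nc_coset I f) = nc_coset I f'"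
  then have "nc_sub f f' \<in> I"
    using nc_coset_eq_iff[OF I] by auto
  moreover have "nc_sub (nc_smult c f) (nc_smult c f') = nc_smult c (nc_sub f f')"
    by (simp add: fun_eq_iff nc_sub_def nc_add_def nc_smult_def algebra_simps)
  ultimately show "id (nc_coset I (nc_smult c f)) = nc_coset I (nc_smult c f')"
    using nc_coset_eq_iff[OF I ncpolys_smult ncpolys_smult] polys nc_ideal_smult[OF I] by simp
qed simp_all

section \<open>The relation ideal up to degree 4\<close>

lemma nc_mult_vanishing_below3_left:
  assumes f: "\<forall>u. length u < 3 \<longrightarrow> f u = 0"
  shows "length w < 3 \<Longrightarrow> nc_mult g f w = 0"
    and "length w = 3 \<Longrightarrow> nc_mult g f w = g [] * f w"
    and "length w = 3 \<Longrightarrow> nc_mult g f (c # w) = g [] * f (c # w) + g [c] * f w"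
proof -
  show short: "nc_mult g f w = 0" if "length w < 3" for g w
    using that f by (intro nc_mult_eq_0_if_short_right) auto
  show deg3: "nc_mult g f w = g [] * f w" if w3: "length w = 3" for g w
  proof -
    obtain d u where "w = d # u" and "length u < 3"
      using w3 by (cases w) auto
    then show ?thesis
      by (simp add: nc_mult_Cons short)
  qed
  show "length w = 3 \<Longrightarrow> nc_mult g f (c # w) = g [] * f (c # w) + g [c] * f w"
    by (simp add: nc_mult_Cons deg3)
qed

lemma nc_mult_vanishing_below3_right:
  assumes f: "\<forall>u. length u < 3 \<longrightarrow> f u = 0"
  shows "length w < 3 \<Longrightarrow> nc_mult f g w = 0"
    and "length w = 3 \<Longrightarrow> nc_mult f g w = f w * g []"
    and "length w = 3 \<Longrightarrow> nc_mult f g (w @ [c]) = f (w @ [c]) * g [] + f w * g [c]"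
proof -
  show short: "nc_mult f g w = 0" if "length w < 3" for g w
    using that f by (intro nc_mult_eq_0_if_short_left) auto
  show deg3: "nc_mult f g w = f w * g []" if w3: "length w = 3" for g w
  proof -
    obtain d u where "w = u @ [d]" and "length u < 3"
      using w3 by (cases w rule: rev_cases) auto
    then show ?thesis
      by (simp add: nc_mult_snoc short)
  qed
  show "length w = 3 \<Longrightarrow> nc_mult f g (w @ [c]) = f (w @ [c]) * g [] + f w * g [c]"
    by (simp add: nc_mult_snoc deg3)
qed

definition nc_lmul :: "bool \<Rightarrow> 'k::field ncpoly \<Rightarrow> 'k ncpoly" where
  "nc_lmul c f = (\<lambda>w. case w of [] \<Rightarrow> 0 | d # u \<Rightarrow> if d = c then f u else 0)"

definition nc_rmul :: "'k::field ncpoly \<Rightarrow> bool \<Rightarrow> 'k ncpoly" where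
  "nc_rmul f c = (\<lambda>w. if w \<noteq> [] \<and> last w = c then f (butlast w) else 0)"

text \<open>Nothing is required above degree 4, which makes this an ideal for arbitrary r3 and r4.\<close>

definition rel_ideal_hull :: "'k::field ncpoly \<Rightarrow> 'k ncpoly \<Rightarrow> 'k ncpoly set" where
  "rel_ideal_hull r3 r4 = {f \<in> ncpolys. (\<forall>w. length w < 3 \<longrightarrow> f w = 0) \<and>
     (\<exists>l. \<forall>w. length w = 3 \<longrightarrow> f w = l * r3 w) \<and>
     (\<exists>a b c d e. \<forall>w. length w = 4 \<longrightarrow> f w = a * nc_lmul X r3 w + b * nc_lmul Y r3 w
         + c * nc_rmul r3 X w + d * nc_rmul r3 Y w + e * r4 w)}"

lemma rel_ideal_hullI:
  assumes "f \<in> ncpolys"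
    and "\<And>w. length w < 3 \<Longrightarrow> f w = 0"
    and "\<And>w. length w = 3 \<Longrightarrow> f w = l * r3 w"
    and "\<And>w. length w = 4 \<Longrightarrow> f w = a * nc_lmul X r3 w + b * nc_lmul Y r3 w
         + c * nc_rmul r3 X w + d * nc_rmul r3 Y w + e * r4 w"
  shows "f \<in> rel_ideal_hull r3 r4"
  unfolding rel_ideal_hull_def using assms by blast

lemma rel_ideal_hullE:
  assumes "f \<in> rel_ideal_hull r3 r4"
  obtains l a b c d e where "f \<in> ncpolys"
    and "\<forall>w. length w < 3 \<longrightarrow> f w = 0"
    and "\<And>w. length w = 3 \<Longrightarrow> f w = l * r3 w"
    and "\<And>w. length w = 4 \<Longrightarrow> f w = a * nc_lmul X r3 w + b * nc_lmul Y r3 w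
         + c * nc_rmul r3 X w + d * nc_rmul r3 Y w + e * r4 w"
  using assms unfolding rel_ideal_hull_def by blast

lemma rel_ideal_hull_add:
  assumes "f \<in> rel_ideal_hull r3 r4" and "g \<in> rel_ideal_hull r3 r4"
  shows "nc_add f g \<in> rel_ideal_hull r3 r4"
proof -
  obtain l a b c d e where f: "f \<in> ncpolys" "\<forall>w. length w < 3 \<longrightarrow> f w = 0"
    "\<And>w. length w = 3 \<Longrightarrow> f w = l * r3 w"
    "\<And>w. length w = 4 \<Longrightarrow> f w = a * nc_lmul X r3 w + b * nc_lmul Y r3 w
         + c * nc_rmul r3 X w + d * nc_rmul r3 Y w + e * r4 w"
    using assms(1) by (elim rel_ideal_hullE) blast
  obtain l' a' b' c' d' e' where g: "g \<in> ncpolys" "\<forall>w. length w < 3 \<longrightarrow> g w = 0"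
    "\<And>w. length w = 3 \<Longrightarrow> g w = l' * r3 w"
    "\<And>w. length w = 4 \<Longrightarrow> g w = a' * nc_lmul X r3 w + b' * nc_lmul Y r3 w
         + c' * nc_rmul r3 X w + d' * nc_rmul r3 Y w + e' * r4 w"
    using assms(2) by (elim rel_ideal_hullE) blast
  show ?thesis
    by (rule rel_ideal_hullI[where l = "l + l'" and a = "a + a'" and b = "b + b'"
          and c = "c + c'" and d = "d + d'" and e = "e + e'"])
      (simp_all add: f g ncpolys_add[OF f(1) g(1), unfolded nc_add_def] nc_add_def
        algebra_simps)
qed

lemma rel_ideal_hull_mult_left:
  assumes "f \<in> rel_ideal_hull r3 r4" and "g \<in> ncpolys"
  shows "nc_mult g f \<in> rel_ideal_hull r3 r4"
proof -
  obtain l a b c d e where f: "f \<in> ncpolys" "\<forall>w. length w < 3 \<longrightarrow> f w = 0"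
    "\<And>w. length w = 3 \<Longrightarrow> f w = l * r3 w"
    "\<And>w. length w = 4 \<Longrightarrow> f w = a * nc_lmul X r3 w + b * nc_lmul Y r3 w
         + c * nc_rmul r3 X w + d * nc_rmul r3 Y w + e * r4 w"
    using assms(1) by (elim rel_ideal_hullE) blast
  note gf = nc_mult_vanishing_below3_left[OF f(2)]
  show ?thesis
  proof (rule rel_ideal_hullI[where l = "g [] * l" and a = "g [] * a + g [X] * l"
        and b = "g [] * b + g [Y] * l" and c = "g [] * c" and d = "g [] * d" and e = "g [] * e"])
    fix w :: "bool list"
    assume "length w = 4"
    then obtain x u where w: "w = x # u" and u: "length u = 3"
      by (cases w) auto
    show "nc_mult g f w = (g [] * a + g [X] * l) * nc_lmul X r3 w
         + (g [] * b + g [Y] * l) * nc_lmul Y r3 w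
         + g [] * c * nc_rmul r3 X w + g [] * d * nc_rmul r3 Y w + g [] * e * r4 w"
      using gf(3)[OF u] f(3)[OF u] f(4)[of w] u
      by (cases x) (simp_all add: w nc_lmul_def algebra_simps)
  qed (simp_all add: f assms(2) ncpolys_mult gf)
qed

lemma rel_ideal_hull_mult_right:
  assumes "f \<in> rel_ideal_hull r3 r4" and "g \<in> ncpolys"
  shows "nc_mult f g \<in> rel_ideal_hull r3 r4"
proof -
  obtain l a b c d e where f: "f \<in> ncpolys" "\<forall>w. length w < 3 \<longrightarrow> f w = 0"
    "\<And>w. length w = 3 \<Longrightarrow> f w = l * r3 w"
    "\<And>w. length w = 4 \<Longrightarrow> f w = a * nc_lmul X r3 w + b * nc_lmul Y r3 w
         + c * nc_rmul r3 X w + d * nc_rmul r3 Y w + e * r4 w"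
    using assms(1) by (elim rel_ideal_hullE) blast
  note fg = nc_mult_vanishing_below3_right[OF f(2)]
  show ?thesis
  proof (rule rel_ideal_hullI[where l = "l * g []" and a = "a * g []" and b = "b * g []"
        and c = "c * g [] + l * g [X]" and d = "d * g [] + l * g [Y]" and e = "e * g []"])
    fix w :: "bool list"
    assume "length w = 4"
    then obtain x u where w: "w = u @ [x]" and u: "length u = 3"
      by (cases w rule: rev_cases) auto
    show "nc_mult f g w = a * g [] * nc_lmul X r3 w + b * g [] * nc_lmul Y r3 w
         + (c * g [] + l * g [X]) * nc_rmul r3 X w + (d * g [] + l * g [Y]) * nc_rmul r3 Y w
         + e * g [] * r4 w"
      using fg(3)[OF u] f(3)[OF u] f(4)[of w] u
      by (cases x) (simp_all add: w nc_rmul_def algebra_simps)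
  qed (simp_all add: f assms(2) ncpolys_mult fg)
qed

lemma rel_ideal_hull_is_ideal: "nc_is_ideal (rel_ideal_hull r3 r4)"
proof -
  have "nc_zero \<in> rel_ideal_hull r3 r4"
    by (rule rel_ideal_hullI[where l = 0 and a = 0 and b = 0 and c = 0 and d = 0 and e = 0])
      (simp_all add: ncpolys_zero [unfolded nc_zero_def] nc_zero_def)
  moreover have "rel_ideal_hull r3 r4 \<subseteq> ncpolys"
    by (auto simp: rel_ideal_hull_def)
  ultimately show ?thesis
    unfolding nc_is_ideal_def
    by (blast intro: rel_ideal_hull_add rel_ideal_hull_mult_left rel_ideal_hull_mult_right)
qed

lemma rel_ideal_subset_hull:
  assumes r3: "nc_homogeneous 3 r3" and r4: "nc_homogeneous 4 r4"
  shows "rel_ideal (r3, r4) \<subseteq> rel_ideal_hull r3 r4"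
  unfolding rel_ideal_def
proof (rule nc_ideal_gen_least[OF rel_ideal_hull_is_ideal])
  have "r3 \<in> rel_ideal_hull r3 r4"
    using r3 unfolding nc_homogeneous_def
    by (intro rel_ideal_hullI[where l = 1 and a = 0 and b = 0 and c = 0 and d = 0 and e = 0]) force+
  moreover have "r4 \<in> rel_ideal_hull r3 r4"
    using r4 unfolding nc_homogeneous_def
    by (intro rel_ideal_hullI[where l = 0 and a = 0 and b = 0 and c = 0 and d = 0 and e = 1]) force+
  ultimately show "{fst (r3, r4), snd (r3, r4)} \<subseteq> rel_ideal_hull r3 r4"
    by simp
qed

section \<open>Graded isomorphisms act by linear substitution\<close>

lemma singular_2x2_kernel:
  fixes a b c d :: "'k::field"
  assumes "a * d - b * c = 0"
  obtains \<mu> \<nu> where "\<mu> \<noteq> 0 \<or> \<nu> \<noteq> 0" and "\<mu> * a + \<nu> * c = 0" and "\<mu> * b + \<nu> * d = 0"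
proof (cases "a = 0 \<and> c = 0")
  case True
  show ?thesis
  proof (cases "b = 0 \<and> d = 0")
    case True
    with \<open>a = 0 \<and> c = 0\<close> show ?thesis
      by (intro that[of 1 0]) auto
  next
    case False
    with \<open>a = 0 \<and> c = 0\<close> show ?thesis
      by (intro that[of d "- b"]) (auto simp: algebra_simps)
  qed
next
  case False
  with assms show ?thesis
    by (intro that[of c "- a"]) (auto simp: algebra_simps)
qed

locale graded_quotient_iso =
  fixes I J :: "'k::field ncpoly set" and \<phi> :: "'k ncpoly set \<Rightarrow> 'k ncpoly set"
  assumes ideal_I: "nc_is_ideal I" and ideal_J: "nc_is_ideal J"
    and iso: "graded_alg_iso I J \<phi>"
begin

definition maps_to :: "'k ncpoly \<Rightarrow> 'k ncpoly \<Rightarrow> bool" where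
  "maps_to f f' \<longleftrightarrow> f \<in> ncpolys \<and> f' \<in> ncpolys \<and> \<phi> (nc_coset I f) = nc_coset J f'"

lemma iso_bij: "bij_betw \<phi> (nc_quot I) (nc_quot J)"
  using iso[unfolded graded_alg_iso_def, THEN conjunct1] .

lemma iso_one: "\<phi> (nc_coset I nc_one) = nc_coset J nc_one"
  using iso[unfolded graded_alg_iso_def, THEN conjunct2, THEN conjunct1] .

lemma iso_add_mult:
  assumes "f \<in> ncpolys" "g \<in> ncpolys" "f' \<in> ncpolys" "g' \<in> ncpolys"
    and "\<phi> (nc_coset I f) = nc_coset J f'" "\<phi> (nc_coset I g) = nc_coset J g'"
  shows "\<phi> (nc_coset I (nc_add f g)) = nc_coset J (nc_add f' g')"
    and "\<phi> (nc_coset I (nc_mult f g)) = nc_coset J (nc_mult f' g')"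
  using iso[unfolded graded_alg_iso_def, THEN conjunct2, THEN conjunct2, THEN conjunct1,
      rule_format, OF assms(1-4)] assms(5,6)
  by simp_all

lemma iso_smult:
  assumes "f \<in> ncpolys" "f' \<in> ncpolys" "\<phi> (nc_coset I f) = nc_coset J f'"
  shows "\<phi> (nc_coset I (nc_smult c f)) = nc_coset J (nc_smult c f')"
  using iso[unfolded graded_alg_iso_def, THEN conjunct2, THEN conjunct2, THEN conjunct2,
      THEN conjunct1, rule_format, OF assms(1,2)] assms(3)
  by simp

lemma iso_deg: "\<phi> ` nc_quot_deg I n = nc_quot_deg J n"
  using iso[unfolded graded_alg_iso_def, THEN conjunct2, THEN conjunct2, THEN conjunct2,
      THEN conjunct2] ..

lemma maps_to_add: "maps_to f f' \<Longrightarrow> maps_to g g' \<Longrightarrow> maps_to (nc_add f g) (nc_add f' g')"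
  unfolding maps_to_def by (simp add: iso_add_mult(1) ncpolys_add)

lemma maps_to_mult: "maps_to f f' \<Longrightarrow> maps_to g g' \<Longrightarrow> maps_to (nc_mult f g) (nc_mult f' g')"
  unfolding maps_to_def by (simp add: iso_add_mult(2) ncpolys_mult)

lemma maps_to_smult: "maps_to f f' \<Longrightarrow> maps_to (nc_smult c f) (nc_smult c f')"
  unfolding maps_to_def by (simp add: iso_smult ncpolys_smult)

lemma maps_to_zero: "maps_to nc_zero nc_zero"
proof -
  have "maps_to nc_one nc_one"
    using iso_one ncpolys_one unfolding maps_to_def by simp
  then have "maps_to (nc_smult 0 nc_one) (nc_smult 0 nc_one)"
    by (rule maps_to_smult)
  moreover have "nc_smult 0 nc_one = (nc_zero :: 'k ncpoly)"
    by (simp add: nc_smult_def nc_zero_def)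
  ultimately show ?thesis
    by simp
qed

lemma maps_to_mem_iff:
  assumes "maps_to f f'"
  shows "f \<in> I \<longleftrightarrow> f' \<in> J"
proof -
  have f: "f \<in> ncpolys" "f' \<in> ncpolys" "\<phi> (nc_coset I f) = nc_coset J f'"
    and zero: "\<phi> (nc_coset I nc_zero) = nc_coset J nc_zero"
    using assms maps_to_zero unfolding maps_to_def by auto
  have "inj_on \<phi> (nc_quot I)"
    using iso_bij by (rule bij_betw_imp_inj_on)
  moreover have "nc_coset I f \<in> nc_quot I" "nc_coset I nc_zero \<in> nc_quot I"
    using f ncpolys_zero unfolding nc_quot_def by auto
  ultimately have "f \<in> I \<longleftrightarrow> \<phi> (nc_coset I f) = \<phi> (nc_coset I nc_zero)"
    using nc_coset_eq_zero_iff[OF ideal_I f(1)] by (auto dest: inj_onD)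
  also have "\<dots> \<longleftrightarrow> f' \<in> J"
    using f zero nc_coset_eq_zero_iff[OF ideal_J f(2)] by simp
  finally show ?thesis .
qed

lemma maps_to_letter:
  obtains f' where "nc_homogeneous 1 f'" and "maps_to (nc_monom [c]) f'"
proof -
  have "nc_coset I (nc_monom [c]) \<in> nc_quot_deg I 1"
    using nc_homogeneous_letter unfolding nc_quot_deg_def by blast
  then have "\<phi> (nc_coset I (nc_monom [c])) \<in> nc_quot_deg J 1"
    using iso_deg by blast
  then obtain f' where "nc_homogeneous 1 f'" "\<phi> (nc_coset I (nc_monom [c])) = nc_coset J f'"
    unfolding nc_quot_deg_def by auto
  with that show ?thesis
    using ncpolys_monom unfolding maps_to_def nc_homogeneous_def by blast
qed

text \<open>A linear relation among the images of x and y would pull back to a linear element of I.\<close>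

lemma maps_to_letters_independent:
  assumes no_linear: "\<And>f c. f \<in> I \<Longrightarrow> f [c] = 0"
    and x': "nc_homogeneous 1 x'" "maps_to (nc_monom [X]) x'"
    and y': "nc_homogeneous 1 y'" "maps_to (nc_monom [Y]) y'"
  shows "x' [X] * y' [Y] - x' [Y] * y' [X] \<noteq> 0"
proof
  assume "x' [X] * y' [Y] - x' [Y] * y' [X] = 0"
  then obtain \<mu> \<nu> where nontrivial: "\<mu> \<noteq> 0 \<or> \<nu> \<noteq> 0"
    and kernel: "\<mu> * x' [X] + \<nu> * y' [X] = 0" "\<mu> * x' [Y] + \<nu> * y' [Y] = 0"
    by (rule singular_2x2_kernel)
  define F where "F = nc_add (nc_smult \<mu> (nc_monom [X])) (nc_smult \<nu> (nc_monom [Y]))"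
  have "maps_to F (nc_add (nc_smult \<mu> x') (nc_smult \<nu> y'))"
    unfolding F_def using x' y' by (intro maps_to_add maps_to_smult)
  moreover have "nc_add (nc_smult \<mu> x') (nc_smult \<nu> y') = nc_zero"
  proof
    fix u :: "bool list"
    show "nc_add (nc_smult \<mu> x') (nc_smult \<nu> y') u = nc_zero u"
    proof (cases "length u = 1")
      case True
      then obtain c where "u = [c]"
        by (cases u) auto
      with kernel show ?thesis
        by (cases c) (simp_all add: nc_add_def nc_smult_def nc_zero_def)
    next
      case False
      then have "x' u = 0" "y' u = 0"
        using x'(1) y'(1) by (auto simp: nc_homogeneous_def)
      then show ?thesis
        by (simp add: nc_add_def nc_smult_def nc_zero_def)
    qed
  qed
  ultimately have "F \<in> I"
    using maps_to_mem_iff nc_ideal_zero[OF ideal_J] by simp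
  then have "F [X] = 0" "F [Y] = 0"
    using no_linear by blast+
  then show False
    using nontrivial by (simp add: F_def nc_add_def nc_smult_def nc_monom_def)
qed

end

definition rel3 :: "'k::field \<Rightarrow> 'k \<Rightarrow> 'k ncpoly \<Rightarrow> 'k ncpoly \<Rightarrow> 'k ncpoly" where
  "rel3 v w x y = nc_add (nc_mult x (nc_mult y y))
     (nc_add (nc_smult v (nc_mult y (nc_mult x y))) (nc_smult w (nc_mult y (nc_mult y x))))"

definition rel4 :: "'k::field \<Rightarrow> 'k \<Rightarrow> 'k \<Rightarrow> 'k ncpoly \<Rightarrow> 'k ncpoly \<Rightarrow> 'k ncpoly" where
  "rel4 s1 s2 s3 x y = nc_add (nc_mult x (nc_mult x (nc_mult x y)))
     (nc_add (nc_smult s1 (nc_mult x (nc_mult x (nc_mult y x))))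
       (nc_add (nc_smult s2 (nc_mult x (nc_mult y (nc_mult x x))))
         (nc_smult s3 (nc_mult y (nc_mult x (nc_mult x x))))))"

definition family_rels :: "'k::field \<Rightarrow> 'k \<Rightarrow> 'k \<Rightarrow> 'k \<Rightarrow> 'k \<Rightarrow> 'k ncpoly \<times> 'k ncpoly" where
  "family_rels v w s1 s2 s3 =
     (rel3 v w (nc_monom [X]) (nc_monom [Y]), rel4 s1 s2 s3 (nc_monom [X]) (nc_monom [Y]))"

lemma rel3_homogeneous:
  assumes "nc_homogeneous 1 x" and "nc_homogeneous 1 y"
  shows "nc_homogeneous 3 (rel3 v w x y)"
proof -
  have "nc_homogeneous (1 + (1 + 1)) (rel3 v w x y)"
    unfolding rel3_def by (intro nc_homogeneous_add nc_homogeneous_smult nc_homogeneous_mult assms)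
  then show ?thesis
    by (simp add: numeral_eq_Suc)
qed

lemma rel4_homogeneous:
  assumes "nc_homogeneous 1 x" and "nc_homogeneous 1 y"
  shows "nc_homogeneous 4 (rel4 s1 s2 s3 x y)"
proof -
  have "nc_homogeneous (1 + (1 + (1 + 1))) (rel4 s1 s2 s3 x y)"
    unfolding rel4_def by (intro nc_homogeneous_add nc_homogeneous_smult nc_homogeneous_mult assms)
  then show ?thesis
    by (simp add: numeral_eq_Suc)
qed

lemma rel3_eval:
  assumes "nc_homogeneous 1 x" and "nc_homogeneous 1 y"
  shows "rel3 v w x y [p, q, r] =
    x [p] * y [q] * y [r] + v * (y [p] * x [q] * y [r]) + w * (y [p] * y [q] * x [r])"
  using assms by (simp add: rel3_def nc_add_def nc_smult_def nc_mult_homogeneous1_Cons mult.assoc)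

lemma rel4_eval:
  assumes "nc_homogeneous 1 x" and "nc_homogeneous 1 y"
  shows "rel4 s1 s2 s3 x y [p, q, r, t] =
    x [p] * x [q] * x [r] * y [t] + s1 * (x [p] * x [q] * y [r] * x [t])
      + s2 * (x [p] * y [q] * x [r] * x [t]) + s3 * (y [p] * x [q] * x [r] * x [t])"
  using assms by (simp add: rel4_def nc_add_def nc_smult_def nc_mult_homogeneous1_Cons mult.assoc)

lemma family_rels_homogeneous:
  "nc_homogeneous 3 (fst (family_rels v w s1 s2 s3))"
  "nc_homogeneous 4 (snd (family_rels v w s1 s2 s3))"
  unfolding family_rels_def fst_conv snd_conv
  by (intro rel3_homogeneous rel4_homogeneous nc_homogeneous_letter)+

lemma family_rels_nc_terms:
  "family_rels v w s1 s2 s3 =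
    (nc_terms [(1, [X,Y,Y]), (v, [Y,X,Y]), (w, [Y,Y,X])],
     nc_terms [(1, [X,X,X,Y]), (s1, [X,X,Y,X]), (s2, [X,Y,X,X]), (s3, [Y,X,X,X])])"
  unfolding family_rels_def rel3_def rel4_def nc_mult_monom
  by (auto simp: fun_eq_iff nc_terms_def nc_monom_def nc_add_def nc_smult_def)

lemma listed_rels_family_rels:
  assumes "r \<in> listed_rels"
  obtains v w s1 s2 s3 where "r = family_rels v w s1 s2 s3"
  using assms unfolding listed_rels_def
proof (elim UnE CollectE exE conjE)
  fix p :: 'a
  assume "r = relsA p"
  then have "r = family_rels 0 (- (p^2)) p (p^2) (p^3)"
    by (auto simp: relsA_def family_rels_nc_terms nc_terms_def fun_eq_iff)
  then show thesis by (rule that)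
next
  fix i p :: 'a
  assume "r = relsB i p"
  then have "r = family_rels 0 (i * p^2) p (p^2) (p^3)"
    by (auto simp: relsB_def family_rels_nc_terms nc_terms_def fun_eq_iff)
  then show thesis by (rule that)
next
  fix j p :: 'a
  assume "r = relsC j p"
  then have "r = family_rels p (p^2) 0 0 (j * p^3)"
    by (auto simp: relsC_def family_rels_nc_terms nc_terms_def fun_eq_iff)
  then show thesis by (rule that)
next
  fix v p :: 'a
  assume "r = relsD v p"
  then have "r = family_rels v (p^2) (v + p) (p^2 + p * v) (p^3)"
    by (auto simp: relsD_def family_rels_nc_terms nc_terms_def fun_eq_iff)
  then show thesis by (rule that)
qed

lemma family_rels_ideal: "nc_is_ideal (rel_ideal (family_rels v w s1 s2 s3))"
  unfolding rel_ideal_def using family_rels_homogeneous[of v w s1 s2 s3]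
  by (intro nc_ideal_gen_is_ideal) (auto simp: nc_homogeneous_def)

lemma family_rels_subset_hull:
  "rel_ideal (family_rels v w s1 s2 s3) \<subseteq>
    rel_ideal_hull (fst (family_rels v w s1 s2 s3)) (snd (family_rels v w s1 s2 s3))"
  using rel_ideal_subset_hull[OF family_rels_homogeneous[of v w s1 s2 s3]] by simp

context graded_quotient_iso
begin

lemma maps_to_rel3: "maps_to x x' \<Longrightarrow> maps_to y y' \<Longrightarrow> maps_to (rel3 v w x y) (rel3 v w x' y')"
  unfolding rel3_def by (intro maps_to_add maps_to_mult maps_to_smult)

lemma maps_to_rel4:
  "maps_to x x' \<Longrightarrow> maps_to y y' \<Longrightarrow> maps_to (rel4 s1 s2 s3 x y) (rel4 s1 s2 s3 x' y')"
  unfolding rel4_def by (intro maps_to_add maps_to_mult maps_to_smult)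

end

lemma substitution_triangular:
  fixes a b c d v w :: "'k::field"
  assumes det: "a * d - b * c \<noteq> 0"
    and xxx: "a * c * c + v * (c * a * c) + w * (c * c * a) = 0"
    and yxx: "b * c * c + v * (d * a * c) + w * (d * c * a) = 0"
  shows "c = 0"
proof (rule ccontr)
  assume c: "c \<noteq> 0"
  have "c * c * (a * (1 + v + w)) = 0"
    using xxx by (simp add: algebra_simps)
  then have A: "a * (1 + v + w) = 0"
    using c by simp
  have "c * (b * c + a * d * (v + w)) = 0"
    using yxx by (simp add: algebra_simps)
  then have B: "b * c + a * d * (v + w) = 0"
    using c by simp
  show False
  proof (cases "a = 0")
    case True
    with B c det show False
      by simp
  next
    case False
    with A have "1 + v + w = 0"
      by simp
    have "a * d - b * c = a * d * (1 + v + w) - (b * c + a * d * (v + w))"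
      by (simp add: algebra_simps)
    with B \<open>1 + v + w = 0\<close> det show False
      by simp
  qed
qed

lemma cubic_image_in_hullD:
  assumes x': "nc_homogeneous 1 x'" and y': "nc_homogeneous 1 y'"
    and det: "x' [X] * y' [Y] - x' [Y] * y' [X] \<noteq> 0"
    and image: "rel3 v w x' y' \<in> rel_ideal_hull (rel3 v' w' (nc_monom [X]) (nc_monom [Y])) r4"
  shows "y' [X] = 0" and "v = v'" and "w = w'"
proof -
  define a b c d where "a = x' [X]" and "b = x' [Y]" and "c = y' [X]" and "d = y' [Y]"
  obtain l where l: "\<And>u. length u = 3 \<Longrightarrow>
      rel3 v w x' y' u = l * rel3 v' w' (nc_monom [X]) (nc_monom [Y]) u"
    using image by (elim rel_ideal_hullE) blast
  have coeff:
    "x' [p] * y' [q] * y' [r] + v * (y' [p] * x' [q] * y' [r]) + w * (y' [p] * y' [q] * x' [r]) =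
      l * (nc_monom [X] [p] * nc_monom [Y] [q] * nc_monom [Y] [r]
        + v' * (nc_monom [Y] [p] * nc_monom [X] [q] * nc_monom [Y] [r])
        + w' * (nc_monom [Y] [p] * nc_monom [Y] [q] * nc_monom [X] [r]))" for p q r
    using l[of "[p, q, r]"]
    by (simp add: rel3_eval[OF x' y'] rel3_eval[OF nc_homogeneous_letter nc_homogeneous_letter])
  have c: "c = 0"
  proof (rule substitution_triangular)
    show "a * d - b * c \<noteq> 0"
      using det by (simp add: a_def b_def c_def d_def)
    show "a * c * c + v * (c * a * c) + w * (c * c * a) = 0"
      using coeff[of X X X] by (simp add: a_def c_def nc_monom_letter_apply)
    show "b * c * c + v * (d * a * c) + w * (d * c * a) = 0"
      using coeff[of Y X X] by (simp add: a_def b_def c_def d_def nc_monom_letter_apply)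
  qed
  then have "a \<noteq> 0" and "d \<noteq> 0"
    using det by (auto simp: a_def b_def c_def d_def)
  moreover have "a * d * d = l" and "v * (a * d * d) = l * v'" and "w * (a * d * d) = l * w'"
    using coeff[of X Y Y] coeff[of Y X Y] coeff[of Y Y X] c
    by (simp_all add: a_def b_def c_def d_def nc_monom_letter_apply ac_simps)
  ultimately show "v = v'" and "w = w'"
    by (metis mult.commute mult_cancel_left no_zero_divisors)+
  show "y' [X] = 0"
    using c by (simp add: c_def)
qed

lemma quartic_image_in_hullD:
  assumes x': "nc_homogeneous 1 x'" and y': "nc_homogeneous 1 y'"
    and triangular: "y' [X] = 0" and diagonal: "x' [X] \<noteq> 0" "y' [Y] \<noteq> 0"
    and image: "rel4 s1 s2 s3 x' y' \<in> rel_ideal_hull (rel3 v' w' (nc_monom [X]) (nc_monom [Y]))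
      (rel4 s1' s2' s3' (nc_monom [X]) (nc_monom [Y]))"
  shows "s1 = s1'" and "s2 = s2'" and "s3 = s3'"
proof -
  define r3 r4 where "r3 = rel3 v' w' (nc_monom [X]) (nc_monom [Y])"
    and "r4 = rel4 s1' s2' s3' (nc_monom [X]) (nc_monom [Y])"
  obtain \<alpha> \<beta> \<gamma> \<delta> \<epsilon> where e: "\<And>u. length u = 4 \<Longrightarrow> rel4 s1 s2 s3 x' y' u =
      \<alpha> * nc_lmul X r3 u + \<beta> * nc_lmul Y r3 u + \<gamma> * nc_rmul r3 X u + \<delta> * nc_rmul r3 Y u + \<epsilon> * r4 u"
    using image unfolding r3_def r4_def by (elim rel_ideal_hullE) blast
  \<comment> \<open>Every term of r3 has two y's, so on words with a single y only r4 contributes.\<close>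
  have coeff: "rel4 s1 s2 s3 x' y' u = \<epsilon> * r4 u"
    if "u \<in> {[X, X, X, Y], [X, X, Y, X], [X, Y, X, X], [Y, X, X, X]}" for u
    using e[of u] that
    by (auto simp: nc_lmul_def nc_rmul_def r3_def nc_monom_letter_apply
        rel3_eval[OF nc_homogeneous_letter nc_homogeneous_letter])
  define D where "D = x' [X] * x' [X] * x' [X] * y' [Y]"
  have "D \<noteq> 0"
    using diagonal by (simp add: D_def)
  moreover have "D = \<epsilon>" and "s1 * D = \<epsilon> * s1'" and "s2 * D = \<epsilon> * s2'" and "s3 * D = \<epsilon> * s3'"
    using coeff[of "[X, X, X, Y]"] coeff[of "[X, X, Y, X]"] coeff[of "[X, Y, X, X]"]
      coeff[of "[Y, X, X, X]"] triangular
    by (simp_all add: D_def r4_def rel4_eval[OF x' y'] nc_monom_letter_apply ac_simps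
        rel4_eval[OF nc_homogeneous_letter nc_homogeneous_letter])
  ultimately show "s1 = s1'" and "s2 = s2'" and "s3 = s3'"
    by (metis mult.commute mult_cancel_left)+
qed

lemma family_rels_graded_iso_imp_eq:
  assumes "graded_alg_iso (rel_ideal (family_rels v w s1 s2 s3))
    (rel_ideal (family_rels v' w' s1' s2' s3')) \<phi>"
  shows "family_rels v w s1 s2 s3 = family_rels v' w' s1' s2' s3'"
proof -
  let ?r = "family_rels v w s1 s2 s3" and ?r' = "family_rels v' w' s1' s2' s3'"
  interpret graded_quotient_iso "rel_ideal ?r" "rel_ideal ?r'" \<phi>
    using assms by unfold_locales (rule family_rels_ideal)+
  have no_linear: "f [c] = 0" if "f \<in> rel_ideal ?r" for f c
    using that family_rels_subset_hull by (fastforce elim: rel_ideal_hullE)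
  have image_in_hull: "f' \<in> rel_ideal_hull (fst ?r') (snd ?r')"
    if "maps_to f f'" and "f \<in> rel_ideal ?r" for f f'
    using that maps_to_mem_iff family_rels_subset_hull by blast
  have relations: "fst ?r \<in> rel_ideal ?r" "snd ?r \<in> rel_ideal ?r"
    unfolding rel_ideal_def using nc_ideal_gen_generators by blast+
  obtain x' where x': "nc_homogeneous 1 x'" "maps_to (nc_monom [X]) x'"
    by (rule maps_to_letter)
  obtain y' where y': "nc_homogeneous 1 y'" "maps_to (nc_monom [Y]) y'"
    by (rule maps_to_letter)
  have det: "x' [X] * y' [Y] - x' [Y] * y' [X] \<noteq> 0"
    using no_linear x' y' by (rule maps_to_letters_independent)
  have r: "fst ?r = rel3 v w (nc_monom [X]) (nc_monom [Y])"
    "snd ?r = rel4 s1 s2 s3 (nc_monom [X]) (nc_monom [Y])"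
    and r': "fst ?r' = rel3 v' w' (nc_monom [X]) (nc_monom [Y])"
    "snd ?r' = rel4 s1' s2' s3' (nc_monom [X]) (nc_monom [Y])"
    by (simp_all add: family_rels_def)
  have "rel3 v w x' y' \<in> rel_ideal_hull (fst ?r') (snd ?r')"
    using image_in_hull maps_to_rel3[OF x'(2) y'(2)] relations(1) unfolding r by blast
  note cubic = cubic_image_in_hullD[OF x'(1) y'(1) det this[unfolded r']]
  have diagonal: "x' [X] \<noteq> 0" "y' [Y] \<noteq> 0"
    using det cubic(1) by auto
  have "rel4 s1 s2 s3 x' y' \<in> rel_ideal_hull (fst ?r') (snd ?r')"
    using image_in_hull maps_to_rel4[OF x'(2) y'(2)] relations(2) unfolding r by blast
  note quartic = quartic_image_in_hullD[OF x'(1) y'(1) cubic(1) diagonal this[unfolded r']]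
  show ?thesis
    using cubic(2,3) quartic by simp
qed

theorem proposition7p12:
  fixes r1 r2 :: "'k::field ncpoly \<times> 'k ncpoly"
  assumes "r1 \<in> listed_rels" and "r2 \<in> listed_rels"
  shows "graded_alg_isomorphic (rel_ideal r1) (rel_ideal r2) \<longleftrightarrow> r1 = r2"
proof -
  obtain v w s1 s2 s3 where r1: "r1 = family_rels v w s1 s2 s3"
    using assms(1) by (rule listed_rels_family_rels)
  obtain v' w' s1' s2' s3' where r2: "r2 = family_rels v' w' s1' s2' s3'"
    using assms(2) by (rule listed_rels_family_rels)
  show ?thesis
  proof
    assume "graded_alg_isomorphic (rel_ideal r1) (rel_ideal r2)"
    then obtain \<phi> where "graded_alg_iso (rel_ideal r1) (rel_ideal r2) \<phi>"
      unfolding graded_alg_isomorphic_def ..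
    then show "r1 = r2"
      unfolding r1 r2 by (rule family_rels_graded_iso_imp_eq)
  next
    assume "r1 = r2"
    then show "graded_alg_isomorphic (rel_ideal r1) (rel_ideal r2)"
      unfolding graded_alg_isomorphic_def r2 using graded_alg_iso_id[OF family_rels_ideal] by blast
  qed
qed

end
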